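(* Let $S$ be a set and let $m:\mathcal{L}\to S$ and $M_1:S\times\Sigma\to\{1,-1,r\}$ be computable functions such that for all $\sigma\in\mathcal{L}$ and $s\in\Sigma$: $M_1(m(\sigma),s)=1$ if $\sigma$ determines $s$ with value $1$; $M_1(m(\sigma),s)=-1$ if $\sigma$ determines $s$ with value $-1$; and $M_1(m(\sigma),s)=r$ if $\sigma$ does not determine $s$. (That is, $\langle M,M_0,M_1,S\rangle$ with $M_0(\sigma,s)=(m(\sigma),s)$ and $M=M_1\circ M_0$ is a Memory-factoring Abstract Generating Automaton for $\mathcal{L}$.) Then $|S|\ge 24$.
   Context: Let $\Sigma=\{A,B,C,a,b,c,\alpha,\beta,\gamma\}$ be nine observables arranged in a $3\times 3$ square with rows $(A,B,C)$, $(a,b,c)$, $(\alpha,\beta,\gamma)$. The six \emph{contexts} are the three rows $\{A,B,C\},\{a,b,c\},\{\alpha,\beta,\gamma\}$ and the three columns $\{A,a,\alpha\},\{B,b,\beta\},\{C,c,\gamma\}$. Each context has a sign: $-1$ for $\{C,c,\gamma\}$ and $+1$ for the other five. Two distinct observables are \emph{compatible} if they lie in a common context, and \emph{incompatible} otherwise. Let $\tilde\Sigma=\{X,\tilde X: X\in\Sigma\}$ (18 letters); the letter $X$ means "observable $X$ measured with value $1$" and $\tilde X$ means "$X$ measured with value $-1$". For a word $w=t_1\cdots t_m\in\tilde\Sigma^*$ define inductively partial assignments $v_0,\dots,v_m:\Sigma\rightharpoonup\{1,-1\}$ (an observable in $\mathrm{dom}(v_i)$ is \emph{determined} after step $i$,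 with value $v_i(X)$), and whether $w$ is consistent: $v_0$ is the empty assignment. Given $v_{i-1}$, let $t_i$ record observable $X$ with value $\varepsilon$. If $X\in\mathrm{dom}(v_{i-1})$ and $v_{i-1}(X)\ne\varepsilon$, then $w$ is \emph{inconsistent}. Otherwise let $u$ be the restriction of $v_{i-1}$ to observables that are equal to or compatible with $X$, extended by $u(X)=\varepsilon$; then $v_i$ is obtained from $u$ by repeatedly doing the following until nothing changes: whenever a context has exactly two of its observables in the domain, assign the third observable the value making the product of the three values equal to the sign of that context. The word $w$ is \emph{consistent} if no step is inconsistent; $\mathcal{L}$ is the set of consistent words (it contains the empty word). For $w\in\mathcal{L}$ of length $m$: $w$ \emph{determines} an observable $s$ with value $v$ if $v_m(s)=v$, and $w$ does not determine $s$ if $s\notin\mathrm{dom}(v_m)$. The symbol $r$ is a third output value meaning "random/undetermined". *)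

theory Defs
  imports Main
begin

text \<open>The nine observables of the 3x3 square: rows (A,B,C), (a,b,c), (alpha,beta,gamma).\<close>
datatype obs = OA | OB | OC | Oa | Ob | Oc | Oalpha | Obeta | Ogamma

definition contexts :: "((obs \<times> obs \<times> obs) \<times> int) list" where
  "contexts = [((OA,OB,OC), 1), ((Oa,Ob,Oc), 1), ((Oalpha,Obeta,Ogamma), 1),
               ((OA,Oa,Oalpha), 1), ((OB,Ob,Obeta), 1), ((OC,Oc,Ogamma), -1)]"

definition ctx_set :: "obs \<times> obs \<times> obs \<Rightarrow> obs set" where
  "ctx_set t = (case t of (x,y,z) \<Rightarrow> {x,y,z})"

definition compatible :: "obs \<Rightarrow> obs \<Rightarrow> bool" where
  "compatible X Y \<longleftrightarrow> X \<noteq> Y \<and> (\<exists>(t,s)\<in>set contexts. X \<in> ctx_set t \<and> Y \<in> ctx_set t)"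

text \<open>Letters: X (value 1) and X-tilde (value -1).\<close>
datatype letter = Pos obs | Neg obs

fun letter_obs :: "letter \<Rightarrow> obs" where
  "letter_obs (Pos X) = X" | "letter_obs (Neg X) = X"

fun letter_val :: "letter \<Rightarrow> int" where
  "letter_val (Pos X) = 1" | "letter_val (Neg X) = -1"

type_synonym assignment = "obs \<Rightarrow> int option"

fun ctx_fill :: "assignment \<Rightarrow> (obs \<times> obs \<times> obs) \<times> int \<Rightarrow> assignment option" where
  "ctx_fill v ((x,y,z), s) =
     (case (v x, v y, v z) of
        (Some p, Some q, None) \<Rightarrow> Some (v(z := Some (s * p * q)))
      | (Some p, None, Some q) \<Rightarrow> Some (v(y := Some (s * p * q)))
      | (None, Some p, Some q) \<Rightarrow> Some (v(x := Some (s * p * q)))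
      | _ \<Rightarrow> None)"

fun prop_step_list :: "assignment \<Rightarrow> ((obs \<times> obs \<times> obs) \<times> int) list \<Rightarrow> assignment" where
  "prop_step_list v [] = v"
| "prop_step_list v (c # cs) = (case ctx_fill v c of Some v' \<Rightarrow> v' | None \<Rightarrow> prop_step_list v cs)"

definition prop_step :: "assignment \<Rightarrow> assignment" where
  "prop_step v = prop_step_list v contexts"

text \<open>Repeat until nothing changes; each effective step enlarges the domain (at most 9
  observables), so 9 iterations reach the fixpoint.\<close>
definition propagate :: "assignment \<Rightarrow> assignment" where
  "propagate v = (prop_step ^^ 9) v"

text \<open>Processing one letter; None = inconsistent.\<close>
definition process :: "assignment \<Rightarrow> letter \<Rightarrow> assignment option" where
  "process v t =
     (let X = letter_obs t; e = letter_val t in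
      if v X \<noteq> None \<and> v X \<noteq> Some e then None
      else Some (propagate ((\<lambda>Y. if compatible X Y then v Y else None)(X := Some e))))"

definition run :: "letter list \<Rightarrow> assignment option" where
  "run w = foldl (\<lambda>acc t. Option.bind acc (\<lambda>v. process v t)) (Some Map.empty) w"

definition consistent :: "letter list \<Rightarrow> bool" where
  "consistent w \<longleftrightarrow> run w \<noteq> None"

definition final_assign :: "letter list \<Rightarrow> assignment" where
  "final_assign w = the (run w)"

datatype outcome = One | MinusOne | R

end

theory Submission
  imports Defs
begin

text \<open>Only the values \<open>1\<close> and \<open>-1\<close> are ever assigned, so \<open>M1 (m \<sigma>)\<close> determines the whole
  final assignment of \<open>\<sigma>\<close> and \<open>|S|\<close> is at least the number of distinct final assignments.
  Already the 18 one-letter words, together with one word per context measuring two of its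
  observables with value \<open>1\<close> (which determines the third), produce 24 different ones.\<close>

lemma ran_fun_upd_subset: "ran (v(x \<mapsto> b)) \<subseteq> insert b (ran v)"
  by (auto simp: ran_def)

lemma ctx_fill_ran:
  assumes "ctx_fill v c = Some v'" "ran v \<subseteq> {1, -1}" "snd c \<in> {1, -1}"
  shows "ran v' \<subseteq> {1, -1}"
proof -
  obtain x y z s where c: "c = ((x, y, z), s)" by (metis prod.exhaust)
  obtain w p q where v': "v' = v(w \<mapsto> s * p * q)" and "p \<in> ran v" "q \<in> ran v"
    using assms(1) by (auto simp: c split: option.splits intro: ranI)
  then have "p \<in> {1, -1}" "q \<in> {1, -1}"
    using assms(2) by blast+
  then have "s * p * q \<in> {1, -1}"
    using assms(3) c by auto
  moreover have "ran v' \<subseteq> insert (s * p * q) (ran v)"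
    unfolding v' by (rule ran_fun_upd_subset)
  ultimately show ?thesis
    using assms(2) by auto
qed

lemma prop_step_list_ran:
  "ran v \<subseteq> {1, -1} \<Longrightarrow> snd ` set cs \<subseteq> {1, -1} \<Longrightarrow> ran (prop_step_list v cs) \<subseteq> {1, -1}"
proof (induction cs)
  case (Cons c cs)
  then show ?case
    by (cases "ctx_fill v c") (simp_all add: ctx_fill_ran)
qed simp

lemma context_signs: "snd ` set contexts \<subseteq> {1, -1}"
  by (simp add: contexts_def)

lemma propagate_ran:
  assumes "ran v \<subseteq> {1, -1}"
  shows "ran (propagate v) \<subseteq> {1, -1}"
proof -
  have "ran ((prop_step ^^ n) v) \<subseteq> {1, -1}" for n
    using assms by (induction n) (simp_all add: prop_step_def prop_step_list_ran context_signs)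
  then show ?thesis
    by (simp add: propagate_def)
qed

lemma process_ran:
  assumes "process v t = Some v'" "ran v \<subseteq> {1, -1}"
  shows "ran v' \<subseteq> {1, -1}"
proof -
  let ?u = "(\<lambda>Y. if compatible (letter_obs t) Y then v Y else None)(letter_obs t \<mapsto> letter_val t)"
  have "ran (\<lambda>Y. if compatible (letter_obs t) Y then v Y else None) \<subseteq> ran v"
    by (auto simp: ran_def)
  moreover have "letter_val t \<in> {1, -1}"
    by (cases t) simp_all
  moreover have "ran ?u \<subseteq> insert (letter_val t) (ran (\<lambda>Y. if compatible (letter_obs t) Y then v Y else None))"
    by (rule ran_fun_upd_subset)
  ultimately have "ran ?u \<subseteq> {1, -1}"
    using assms(2) by auto
  moreover have "v' = propagate ?u"
    using assms(1) by (auto simp: process_def Let_def split: if_splits)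
  ultimately show ?thesis
    by (simp add: propagate_ran)
qed

lemma run_snoc: "run (w @ [t]) = Option.bind (run w) (\<lambda>v. process v t)"
  by (simp add: run_def)

lemma run_ran: "run w = Some v \<Longrightarrow> ran v \<subseteq> {1, -1}"
proof (induction w arbitrary: v rule: rev_induct)
  case (snoc t w)
  then obtain u where "run w = Some u" "process u t = Some v"
    by (cases "run w") (simp_all add: run_snoc)
  then show ?case
    using snoc.IH by (simp add: process_ran)
qed (simp add: run_def)

lemma propagate_eq_fixpoint:
  assumes "prop_step v = v'" "prop_step v' = v'"
  shows "propagate v = v'"
proof -
  have "(prop_step ^^ n) v' = v'" for n
    using assms(2) by (induction n) simp_all
  then show ?thesis
    using assms(1) by (simp add: propagate_def funpow_Suc_right[of 8, simplified] del: funpow.simps)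
qed

lemma run_singleton: "run [t] = Some [letter_obs t \<mapsto> letter_val t]"
proof -
  have "prop_step [letter_obs t \<mapsto> letter_val t] = [letter_obs t \<mapsto> letter_val t]"
    by (cases t; cases "letter_obs t") (simp_all add: prop_step_def contexts_def)
  then show ?thesis
    by (simp add: run_def process_def propagate_eq_fixpoint)
qed

lemma run_context_pair:
  assumes "((x, y, z), s) \<in> set contexts"
  shows "run [Pos x, Pos y] = Some [x \<mapsto> 1, y \<mapsto> 1, z \<mapsto> s]"
proof -
  have "x \<noteq> y" and "compatible y x"
    using assms by (auto simp: contexts_def compatible_def ctx_set_def)
  then have restrict: "(\<lambda>Y. if compatible y Y then [x \<mapsto> 1] Y else None)(y \<mapsto> 1) = [x \<mapsto> 1, y \<mapsto> 1]"
    by (auto simp: fun_eq_iff)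
  have "prop_step [x \<mapsto> 1, y \<mapsto> 1] = [x \<mapsto> 1, y \<mapsto> 1, z \<mapsto> s]"
    and "prop_step [x \<mapsto> 1, y \<mapsto> 1, z \<mapsto> s] = [x \<mapsto> 1, y \<mapsto> 1, z \<mapsto> s]"
    using assms by (auto simp: contexts_def prop_step_def)
  then have "propagate [x \<mapsto> 1, y \<mapsto> 1] = [x \<mapsto> 1, y \<mapsto> 1, z \<mapsto> s]"
    by (rule propagate_eq_fixpoint)
  with \<open>x \<noteq> y\<close> show ?thesis
    using run_snoc[of "[Pos x]" "Pos y"] by (simp add: run_singleton process_def restrict)
qed

definition all_obs :: "obs list" where
  "all_obs = [OA, OB, OC, Oa, Ob, Oc, Oalpha, Obeta, Ogamma]"

definition separating_words :: "letter list list" where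
  "separating_words =
     map (\<lambda>X. [Pos X]) all_obs @ map (\<lambda>X. [Neg X]) all_obs @
     map (\<lambda>((x, y, _), _). [Pos x, Pos y]) contexts"

lemma separating_words_consistent: "w \<in> set separating_words \<Longrightarrow> consistent w"
  by (auto simp: separating_words_def consistent_def run_singleton run_context_pair)

lemma distinct_final_assign_separating_words:
  "distinct (map (\<lambda>w. map (final_assign w) all_obs) separating_words)"
  by (simp add: separating_words_def all_obs_def contexts_def final_assign_def
      run_singleton run_context_pair)

lemma card_final_assign_separating_words: "card (final_assign ` set separating_words) = 24"
proof -
  have "distinct (map final_assign separating_words)"
    using distinct_final_assign_separating_words by (simp add: distinct_map inj_on_def)
  then show ?thesis
    using distinct_card by (fastforce simp: separating_words_def all_obs_def contexts_def)
qed

fun outcome_value :: "outcome \<Rightarrow> int option" where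
  "outcome_value One = Some 1"
| "outcome_value MinusOne = Some (-1)"
| "outcome_value R = None"

lemma final_assign_eq_decoded_outcome:
  assumes pos: "\<forall>\<sigma> s. consistent \<sigma> \<longrightarrow> final_assign \<sigma> s = Some 1 \<longrightarrow> M (m \<sigma>) s = One"
    and neg: "\<forall>\<sigma> s. consistent \<sigma> \<longrightarrow> final_assign \<sigma> s = Some (-1) \<longrightarrow> M (m \<sigma>) s = MinusOne"
    and rnd: "\<forall>\<sigma> s. consistent \<sigma> \<longrightarrow> final_assign \<sigma> s = None \<longrightarrow> M (m \<sigma>) s = R"
    and "consistent \<sigma>"
  shows "final_assign \<sigma> = outcome_value \<circ> M (m \<sigma>)"
proof
  fix s
  have "ran (final_assign \<sigma>) \<subseteq> {1, -1}"
    using \<open>consistent \<sigma>\<close> run_ran by (auto simp: consistent_def final_assign_def)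
  then have "final_assign \<sigma> s \<in> {None, Some 1, Some (-1)}"
    by (cases "final_assign \<sigma> s") (auto intro: ranI)
  then show "final_assign \<sigma> s = (outcome_value \<circ> M (m \<sigma>)) s"
    using pos neg rnd \<open>consistent \<sigma>\<close> by auto
qed

theorem mainTheorem7:
  fixes S :: "'s set" and m :: "letter list \<Rightarrow> 's" and M1 :: "'s \<Rightarrow> obs \<Rightarrow> outcome"
  assumes m_in: "\<forall>\<sigma>. consistent \<sigma> \<longrightarrow> m \<sigma> \<in> S"
    and pos: "\<forall>\<sigma> s. consistent \<sigma> \<longrightarrow> final_assign \<sigma> s = Some 1 \<longrightarrow> M1 (m \<sigma>) s = One"
    and neg: "\<forall>\<sigma> s. consistent \<sigma> \<longrightarrow> final_assign \<sigma> s = Some (-1) \<longrightarrow> M1 (m \<sigma>) s = MinusOne"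
    and rnd: "\<forall>\<sigma> s. consistent \<sigma> \<longrightarrow> final_assign \<sigma> s = None \<longrightarrow> M1 (m \<sigma>) s = R"
  shows "infinite S \<or> 24 \<le> card S"
proof (cases "finite S")
  case True
  let ?W = "set separating_words"
  have "final_assign ` ?W = (\<lambda>q. outcome_value \<circ> M1 q) ` m ` ?W"
    using final_assign_eq_decoded_outcome[where M = M1 and m = m, OF pos neg rnd]
      separating_words_consistent
    by (auto simp: image_image intro!: image_cong)
  then have "24 \<le> card (m ` ?W)"
    using card_final_assign_separating_words card_image_le by (metis finite_imageI finite_set)
  also have "\<dots> \<le> card S"
    using m_in separating_words_consistent True by (auto intro!: card_mono)
  finally show ?thesis by simp
qed simp

end
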